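(* Let $G$ be a connected graph and let $e=uv\in E(G)$ be an edge with $\min\{\deg_G(u),\deg_G(v)\}\geq 2$. Let $G'$ be the graph obtained from $G$ by applying Operation 1 to $e$, i.e. deleting the edge $uv$ and adding two new vertices $u_e,v_e$ together with the edges $uu_e$ and $vv_e$ (so $\deg_{G'}(u_e)=\deg_{G'}(v_e)=1$). Then $rc(L(G))\leq rc(L(G'))$.
   Context: All graphs are simple, finite and undirected. $L(H)$ denotes the line graph of $H$: its vertex set is $E(H)$, two vertices being adjacent iff the corresponding edges share an end. For an edge-colouring of a graph (adjacent edges may receive the same colour), a path is rainbow if no two of its edges have the same colour; the graph is rainbow connected if every two vertices are joined by a rainbow path. The rainbow connection number $rc(H)$ of a connected graph $H$ is the smallest number of colours in an edge-colouring making $H$ rainbow connected (if $H$ is disconnected, $rc(H)$ is taken to be $\infty$). *)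

theory Defs
  imports Main "HOL-Library.Extended_Nat"
begin

definition simple_graph :: "'a set \<Rightarrow> 'a set set \<Rightarrow> bool" where
  "simple_graph V E \<longleftrightarrow> finite V \<and>
     (\<forall>e\<in>E. \<exists>x y. x \<in> V \<and> y \<in> V \<and> x \<noteq> y \<and> e = {x, y})"

definition degree :: "'a set set \<Rightarrow> 'a \<Rightarrow> nat" where
  "degree E v = card {e \<in> E. v \<in> e}"

definition is_path :: "'a set \<Rightarrow> 'a set set \<Rightarrow> 'a list \<Rightarrow> bool" where
  "is_path V E xs \<longleftrightarrow> xs \<noteq> [] \<and> distinct xs \<and> set xs \<subseteq> V \<and>
     (\<forall>i. Suc i < length xs \<longrightarrow> {xs ! i, xs ! Suc i} \<in> E)"

definition path_edges :: "'a list \<Rightarrow> 'a set list" where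
  "path_edges xs = map (\<lambda>i. {xs ! i, xs ! Suc i}) [0..<length xs - 1]"

definition connected_graph :: "'a set \<Rightarrow> 'a set set \<Rightarrow> bool" where
  "connected_graph V E \<longleftrightarrow>
     (\<forall>x\<in>V. \<forall>y\<in>V. \<exists>xs. is_path V E xs \<and> hd xs = x \<and> last xs = y)"

definition rainbow_connected :: "'a set \<Rightarrow> 'a set set \<Rightarrow> ('a set \<Rightarrow> nat) \<Rightarrow> bool" where
  "rainbow_connected V E c \<longleftrightarrow>
     (\<forall>x\<in>V. \<forall>y\<in>V. \<exists>xs. is_path V E xs \<and> hd xs = x \<and> last xs = y \<and>
        distinct (map c (path_edges xs)))"

definition rc :: "'a set \<Rightarrow> 'a set set \<Rightarrow> enat" where
  "rc V E = (if connected_graph V E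
     then enat (LEAST k. \<exists>c. (\<forall>e\<in>E. c e < k) \<and> rainbow_connected V E c)
     else \<infinity>)"

definition line_graph_edges :: "'a set set \<Rightarrow> 'a set set set" where
  "line_graph_edges E = {{e, f} | e f. e \<in> E \<and> f \<in> E \<and> e \<noteq> f \<and> e \<inter> f \<noteq> {}}"

definition rc_line :: "'a set set \<Rightarrow> enat" where
  "rc_line E = rc E (line_graph_edges E)"

end

theory Submission
  imports Defs "HOL-Library.Sublist"
begin

text \<open>Collapsing the two pendant edges \<open>u u\<^sub>e\<close> and \<open>v v\<^sub>e\<close> of \<open>G'\<close> back onto \<open>uv\<close> maps
  the vertices of \<open>L(G')\<close> onto those of \<open>L(G)\<close> and induces a bijection between the edges
  of the two line graphs: two edges of \<open>L(G')\<close> with the same image would need an edge of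
  \<open>G'\<close> meeting both \<open>u\<close> and \<open>v\<close>. Colour each edge of \<open>L(G)\<close> like its preimage. The image
  of a rainbow path of \<open>L(G')\<close> is then a rainbow walk, and shortcutting the walk at repeated
  vertices leaves a path whose edges form a subsequence, hence are still rainbow.\<close>

lemma path_edges_Nil [simp]: "path_edges [] = []"
  and path_edges_singleton [simp]: "path_edges [x] = []"
  by (simp_all add: path_edges_def)

lemma path_edges_Cons_Cons [simp]: "path_edges (x # y # zs) = {x, y} # path_edges (y # zs)"
  unfolding path_edges_def by (simp add: upt_conv_Cons map_Suc_upt[symmetric] del: upt_Suc)

lemma path_edges_append_Cons:
  "path_edges (xs @ z # ys) = path_edges (xs @ [z]) @ path_edges (z # ys)"
  by (induction xs rule: induct_list012) auto

lemma path_edges_map: "path_edges (map f xs) = map ((`) f) (path_edges xs)"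
  by (induction xs rule: induct_list012) auto

lemma set_path_edges_subset_iff:
  "set (path_edges xs) \<subseteq> F \<longleftrightarrow> (\<forall>i. Suc i < length xs \<longrightarrow> {xs ! i, xs ! Suc i} \<in> F)"
  unfolding path_edges_def by auto

lemma mem_path_edges_subset: "s \<in> set (path_edges xs) \<Longrightarrow> s \<subseteq> set xs"
  by (induction xs arbitrary: s rule: induct_list012) auto

lemma distinct_path_edges: "distinct xs \<Longrightarrow> distinct (path_edges xs)"
  by (induction xs rule: induct_list012) (auto dest: mem_path_edges_subset)

lemma is_path_iff:
  "is_path W F xs \<longleftrightarrow> xs \<noteq> [] \<and> distinct xs \<and> set xs \<subseteq> W \<and> set (path_edges xs) \<subseteq> F"
  unfolding is_path_def set_path_edges_subset_iff ..

lemma walk_contains_path: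
  assumes "xs \<noteq> []" "set xs \<subseteq> W" "set (path_edges xs) \<subseteq> F"
  shows "\<exists>ys. is_path W F ys \<and> hd ys = hd xs \<and> last ys = last xs \<and>
           subseq (path_edges ys) (path_edges xs)"
  using assms
proof (induction "length xs" arbitrary: xs rule: less_induct)
  case less
  show ?case
  proof (cases "distinct xs")
    case True
    with less.prems show ?thesis by (auto simp: is_path_iff)
  next
    case False
    then obtain as z bs cs where xs: "xs = as @ z # bs @ z # cs"
      using not_distinct_decomp[OF False] by auto
    define xs' where "xs' = as @ z # cs"
    have "path_edges xs = path_edges (as @ [z]) @ path_edges (z # bs @ z # cs)"
      unfolding xs by (rule path_edges_append_Cons)
    also have "path_edges (z # bs @ z # cs) = path_edges (z # bs @ [z]) @ path_edges (z # cs)"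
      using path_edges_append_Cons[of "z # bs" z cs] by (simp only: append_Cons)
    finally have edges:
      "path_edges xs = path_edges (as @ [z]) @ path_edges (z # bs @ [z]) @ path_edges (z # cs)" .
    have edges': "path_edges xs' = path_edges (as @ [z]) @ path_edges (z # cs)"
      unfolding xs'_def by (rule path_edges_append_Cons)
    have "subseq (path_edges xs') (path_edges xs)"
      unfolding edges edges' by (simp add: subseq_append' list_emb_append2)
    moreover have "hd xs' = hd xs"
      unfolding xs xs'_def by (cases as) simp_all
    moreover have "last xs' = last xs"
      unfolding xs xs'_def by (cases cs rule: rev_cases) simp_all
    moreover obtain ys where "is_path W F ys" "hd ys = hd xs'" "last ys = last xs'"
      "subseq (path_edges ys) (path_edges xs')"
    proof (rule less.hyps[of xs', elim_format])
      show "length xs' < length xs" "xs' \<noteq> []" "set xs' \<subseteq> W"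
        using less.prems unfolding xs xs'_def by auto
      show "set (path_edges xs') \<subseteq> F"
        using less.prems(3) unfolding edges edges' by auto
    qed blast
    ultimately show ?thesis using subseq_order.trans by metis
  qed
qed

lemma distinct_subseq: "subseq xs ys \<Longrightarrow> distinct ys \<Longrightarrow> distinct xs"
  using in_set_subseqs subseqs_distinctD by blast

lemma rainbow_connected_imp_connected_graph:
  "rainbow_connected W F c \<Longrightarrow> connected_graph W F"
  unfolding rainbow_connected_def connected_graph_def by blast

lemma rainbow_connected_if_inj_on:
  assumes "connected_graph W F" "inj_on c F"
  shows "rainbow_connected W F c"
  unfolding rainbow_connected_def
proof (intro ballI)
  fix x y assume "x \<in> W" "y \<in> W"
  then obtain xs where xs: "is_path W F xs" "hd xs = x" "last xs = y"
    using assms(1) unfolding connected_graph_def by blast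
  then have "distinct (map c (path_edges xs))"
    using assms(2) by (auto simp: is_path_iff distinct_map distinct_path_edges intro: inj_on_subset)
  with xs show "\<exists>xs. is_path W F xs \<and> hd xs = x \<and> last xs = y \<and> distinct (map c (path_edges xs))"
    by blast
qed

lemma rainbow_connected_image:
  assumes onto: "f ` W' = W" and edges: "bij_betw ((`) f) F' F"
    and rainbow: "rainbow_connected W' F' c'"
  shows "rainbow_connected W F (c' \<circ> the_inv_into F' ((`) f))"
  unfolding rainbow_connected_def
proof (intro ballI)
  let ?c = "c' \<circ> the_inv_into F' ((`) f)"
  fix x y assume "x \<in> W" "y \<in> W"
  then obtain x' y' where "x' \<in> W'" "y' \<in> W'" "x = f x'" "y = f y'"
    using onto by blast
  then obtain xs where xs: "is_path W' F' xs" "hd xs = x'" "last xs = y'"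
    "distinct (map c' (path_edges xs))"
    using rainbow unfolding rainbow_connected_def by blast
  have "set (path_edges xs) \<subseteq> F'"
    using xs(1) by (simp add: is_path_iff)
  then have colours: "map ?c (path_edges (map f xs)) = map c' (path_edges xs)"
    using edges by (simp add: path_edges_map bij_betw_def the_inv_into_f_f subset_iff)
  have walk: "map f xs \<noteq> []" "set (map f xs) \<subseteq> W" "set (path_edges (map f xs)) \<subseteq> F"
    using xs(1) onto edges by (auto simp: is_path_iff path_edges_map bij_betw_def)
  obtain ys where ys: "is_path W F ys" "hd ys = hd (map f xs)" "last ys = last (map f xs)"
    "subseq (path_edges ys) (path_edges (map f xs))"
    using walk_contains_path[OF walk] by blast
  have "hd ys = x" "last ys = y"
    using ys(2,3) walk(1) xs(2,3) \<open>x = f x'\<close> \<open>y = f y'\<close> by (simp_all add: hd_map last_map)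
  moreover have "distinct (map ?c (path_edges ys))"
    using distinct_subseq[OF subseq_map[OF ys(4)]] xs(4) unfolding colours[symmetric] .
  ultimately show "\<exists>ys. is_path W F ys \<and> hd ys = x \<and> last ys = y \<and> distinct (map ?c (path_edges ys))"
    using ys(1) by blast
qed

lemma rc_image_le:
  assumes "finite F'" "f ` W' = W" "bij_betw ((`) f) F' F"
  shows "rc W F \<le> rc W' F'"
proof (cases "connected_graph W' F'")
  case False
  then show ?thesis by (simp add: rc_def)
next
  case True
  define K where "K = (LEAST k. \<exists>c. (\<forall>s\<in>F'. c s < k) \<and> rainbow_connected W' F' c)"
  obtain h where "bij_betw h F' {..<card F'}"
    using ex_bij_betw_finite_nat[OF assms(1)] atLeast0LessThan by metis
  then have "(\<forall>s\<in>F'. h s < card F') \<and> rainbow_connected W' F' h"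
    using rainbow_connected_if_inj_on[OF True] by (auto simp: bij_betw_def)
  then have "\<exists>k c. (\<forall>s\<in>F'. c s < k) \<and> rainbow_connected W' F' c"
    by blast
  then have "\<exists>c. (\<forall>s\<in>F'. c s < K) \<and> rainbow_connected W' F' c"
    unfolding K_def by (rule LeastI_ex)
  then obtain c' where c': "\<forall>s\<in>F'. c' s < K" "rainbow_connected W' F' c'"
    by blast
  let ?c = "c' \<circ> the_inv_into F' ((`) f)"
  have "\<forall>t\<in>F. ?c t < K"
    using c'(1) assms(3) by (auto simp: bij_betw_def the_inv_into_into)
  moreover have "rainbow_connected W F ?c"
    using rainbow_connected_image[OF assms(2,3) c'(2)] .
  ultimately have "(LEAST k. \<exists>c. (\<forall>t\<in>F. c t < k) \<and> rainbow_connected W F c) \<le> K"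
    by (intro Least_le) blast
  then show ?thesis
    using True rainbow_connected_imp_connected_graph[OF \<open>rainbow_connected W F ?c\<close>]
    by (simp add: rc_def K_def)
qed

lemma doubleton_in_line_graph_edges_iff:
  "{x, y} \<in> line_graph_edges F \<longleftrightarrow> x \<in> F \<and> y \<in> F \<and> x \<noteq> y \<and> x \<inter> y \<noteq> {}"
  unfolding line_graph_edges_def by (auto simp: doubleton_eq_iff)

lemma line_graph_edgesE:
  assumes "s \<in> line_graph_edges F"
  obtains x y where "s = {x, y}" "x \<in> F" "y \<in> F" "x \<noteq> y" "x \<inter> y \<noteq> {}"
  using assms unfolding line_graph_edges_def by blast

lemma doubleton_containing: "x \<in> {p, q} \<Longrightarrow> \<exists>y. {p, q} = {x, y}"
  by blast

lemma line_graph_edges_subset_Pow: "line_graph_edges F \<subseteq> Pow F"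
  unfolding line_graph_edges_def by blast

lemma line_graph_edges_restrict: "s \<in> line_graph_edges F \<Longrightarrow> s \<subseteq> G \<Longrightarrow> s \<in> line_graph_edges G"
  unfolding line_graph_edges_def by blast

lemma finite_line_graph_edges: "finite F \<Longrightarrow> finite (line_graph_edges F)"
  using line_graph_edges_subset_Pow by (rule finite_subset) simp

locale edge_split =
  fixes V :: "'a set" and E :: "'a set set" and u v ue ve :: 'a
  assumes simple: "simple_graph V E" and uv_edge: "{u, v} \<in> E"
    and ue_new: "ue \<notin> V" and ve_new: "ve \<notin> V" and ue_ve: "ue \<noteq> ve"
begin

abbreviation "e \<equiv> {u, v}"
abbreviation "eu \<equiv> {u, ue}"
abbreviation "ev \<equiv> {v, ve}"
abbreviation "E' \<equiv> (E - {e}) \<union> {eu, ev}"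

definition merge :: "'a set \<Rightarrow> 'a set" where
  "merge x = (if x = eu \<or> x = ev then e else x)"

lemma edge_subset: "x \<in> E \<Longrightarrow> x \<subseteq> V"
  using simple unfolding simple_graph_def by auto

lemma finite_edges: "finite E"
proof (rule finite_subset)
  show "E \<subseteq> Pow V" using edge_subset by blast
  show "finite (Pow V)" using simple by (simp add: simple_graph_def)
qed

lemma edge_is_doubleton:
  assumes "x \<in> E" obtains p q where "p \<noteq> q" "x = {p, q}"
  using simple assms unfolding simple_graph_def by auto

lemma u_ne_v: "u \<noteq> v"
  using edge_is_doubleton[OF uv_edge] by (auto simp: doubleton_eq_iff)

lemma edge_containing_u_v: "x \<in> E \<Longrightarrow> u \<in> x \<Longrightarrow> v \<in> x \<Longrightarrow> x = e"
  using u_ne_v by (elim edge_is_doubleton) auto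

lemma new_vertices_not_in_edge: "x \<in> E \<Longrightarrow> ue \<notin> x \<and> ve \<notin> x"
  using edge_subset ue_new ve_new by auto

lemma pendants_not_in_E: "eu \<notin> E" "ev \<notin> E"
  using new_vertices_not_in_edge by auto

lemma pendants_disjoint: "eu \<inter> ev = {}"
  using u_ne_v ue_ve new_vertices_not_in_edge[OF uv_edge] by auto

lemma pendant_u_line_edge_iff: "{eu, y} \<in> line_graph_edges E' \<longleftrightarrow> y \<in> E - {e} \<and> u \<in> y"
  using pendants_not_in_E pendants_disjoint new_vertices_not_in_edge
  by (auto simp: doubleton_in_line_graph_edges_iff)

lemma pendant_v_line_edge_iff: "{ev, y} \<in> line_graph_edges E' \<longleftrightarrow> y \<in> E - {e} \<and> v \<in> y"
  using pendants_not_in_E pendants_disjoint new_vertices_not_in_edge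
  by (auto simp: doubleton_in_line_graph_edges_iff)

lemma line_graph_edges_split_cases:
  assumes "s \<in> line_graph_edges E'"
  obtains (at_u) y where "s = {eu, y}" "y \<in> E - {e}" "u \<in> y" "v \<notin> y"
    | (at_v) y where "s = {ev, y}" "y \<in> E - {e}" "v \<in> y" "u \<notin> y"
    | (old) "s \<in> line_graph_edges E" "e \<notin> s"
proof -
  obtain p q where s: "s = {p, q}" "p \<in> E'" "q \<in> E'" "p \<noteq> q" "p \<inter> q \<noteq> {}"
    using assms by (elim line_graph_edgesE)
  consider (u_pendant) y where "s = {eu, y}" | (v_pendant) y where "s = {ev, y}"
    | (no_pendant) "eu \<notin> s" "ev \<notin> s"
    using doubleton_containing s(1) by metis
  then show ?thesis
  proof cases
    case (u_pendant y)
    have "y \<in> E - {e}" "u \<in> y"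
      using assms[unfolded u_pendant pendant_u_line_edge_iff] by simp_all
    moreover from this have "v \<notin> y"
      using edge_containing_u_v by blast
    ultimately show ?thesis by (rule at_u[OF u_pendant])
  next
    case (v_pendant y)
    have "y \<in> E - {e}" "v \<in> y"
      using assms[unfolded v_pendant pendant_v_line_edge_iff] by simp_all
    moreover from this have "u \<notin> y"
      using edge_containing_u_v by blast
    ultimately show ?thesis by (rule at_v[OF v_pendant])
  next
    case no_pendant
    then have "p \<in> E - {e}" "q \<in> E - {e}"
      using s(1-3) by auto
    then show ?thesis
      using no_pendant s by (intro old) (auto simp: doubleton_in_line_graph_edges_iff)
  qed
qed

lemma merge_pendants [simp]: "merge eu = e" "merge ev = e"
  by (simp_all add: merge_def)

lemma merge_old_edge [simp]: "x \<in> E \<Longrightarrow> merge x = x"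
  using pendants_not_in_E by (auto simp: merge_def)

lemma merge_image_E': "merge ` E' = E"
  using uv_edge by auto

lemma merge_image_line_graph_edge:
  assumes "s \<in> line_graph_edges E'"
  shows "merge ` s \<in> line_graph_edges E"
  using assms
proof (cases rule: line_graph_edges_split_cases)
  case (at_u y)
  then show ?thesis using uv_edge by (auto simp: doubleton_in_line_graph_edges_iff)
next
  case (at_v y)
  then show ?thesis using uv_edge by (auto simp: doubleton_in_line_graph_edges_iff)
next
  case old
  then have "merge ` s = s"
    by (auto elim!: line_graph_edgesE)
  with old show ?thesis by simp
qed

definition unmerge :: "'a set set \<Rightarrow> 'a set set" where
  "unmerge t = (if e \<in> t then insert (if u \<in> \<Union>(t - {e}) then eu else ev) (t - {e}) else t)"

lemma unmerge_merge_image: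
  assumes "s \<in> line_graph_edges E'"
  shows "unmerge (merge ` s) = s"
  using assms
proof (cases rule: line_graph_edges_split_cases)
  case (at_u y)
  then have "merge ` s = {e, y}" "{e, y} - {e} = {y}" by auto
  with at_u show ?thesis by (simp add: unmerge_def)
next
  case (at_v y)
  then have "merge ` s = {e, y}" "{e, y} - {e} = {y}" by auto
  with at_v show ?thesis by (simp add: unmerge_def)
next
  case old
  then have "merge ` s = s"
    using line_graph_edges_subset_Pow by force
  with old show ?thesis by (simp add: unmerge_def)
qed

lemma line_graph_edges_subset_merge_image: "line_graph_edges E \<subseteq> (`) merge ` line_graph_edges E'"
proof
  fix t assume t: "t \<in> line_graph_edges E"
  then have merge_t: "merge ` t = t"
    using line_graph_edges_subset_Pow by force
  show "t \<in> (`) merge ` line_graph_edges E'"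
  proof (cases "e \<in> t")
    case False
    with t have "t \<in> line_graph_edges E'"
      using line_graph_edges_subset_Pow by (force intro: line_graph_edges_restrict)
    with merge_t show ?thesis by (metis imageI)
  next
    case True
    then obtain y where y: "t = {e, y}"
      using doubleton_containing t by (metis line_graph_edgesE)
    with t have "y \<in> E - {e}" "u \<in> y \<or> v \<in> y"
      by (auto simp: doubleton_in_line_graph_edges_iff)
    then have "{eu, y} \<in> line_graph_edges E' \<and> t = merge ` {eu, y} \<or>
               {ev, y} \<in> line_graph_edges E' \<and> t = merge ` {ev, y}"
      unfolding pendant_u_line_edge_iff pendant_v_line_edge_iff y by auto
    then show ?thesis by blast
  qed
qed

lemma bij_betw_merge_image: "bij_betw ((`) merge) (line_graph_edges E') (line_graph_edges E)"
  unfolding bij_betw_def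
  using inj_on_inverseI[where g = unmerge, OF unmerge_merge_image] merge_image_line_graph_edge
    line_graph_edges_subset_merge_image
  by blast

end

theorem mainTheorem1:
  fixes V :: "'a set" and E :: "'a set set" and u v ue ve :: 'a
  assumes "simple_graph V E"
    and "connected_graph V E"
    and "{u, v} \<in> E"
    and "min (degree E u) (degree E v) \<ge> 2"
    and "ue \<notin> V" and "ve \<notin> V" and "ue \<noteq> ve"
  shows "rc_line E \<le> rc_line ((E - {{u, v}}) \<union> {{u, ue}, {v, ve}})"
proof -
  interpret edge_split V E u v ue ve
    using assms by unfold_locales
  have "finite (line_graph_edges E')"
    using finite_edges by (simp add: finite_line_graph_edges)
  then show ?thesis
    unfolding rc_line_def using merge_image_E' bij_betw_merge_image by (rule rc_image_le)
qed

end
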